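(* Let $(G,\alpha,\beta)$ be a minimal counterexample. Then $G$ is connected and has minimum degree at least $3$.
   Context: A counterexample is a triple $(G,\alpha,\beta)$ such that $G$ is a planar graph of girth $5$, $\alpha$ is a proper $4$-colouring of $G$, $\beta$ is a proper $3$-colouring of $G$ (colours $\{1,2,3\}$), and there is no recolouring sequence from $\alpha$ to $\beta$, i.e. no sequence of proper $4$-colourings starting at $\alpha$ and ending at $\beta$ in which consecutive colourings differ on exactly one vertex. A counterexample $(G,\alpha,\beta)$ is minimal if $|V(G)|\leq|V(H)|$ for every counterexample $(H,\alpha',\beta')$. *)

theory Defs
  imports "HOL-Analysis.Analysis"
begin

definition graph :: "'a set \<Rightarrow> 'a set set \<Rightarrow> bool" where
  "graph V E \<longleftrightarrow> finite V \<and> (\<forall>e\<in>E. \<exists>u v. e = {u, v} \<and> u \<noteq> v \<and> u \<in> V \<and> v \<in> V)"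

definition adj :: "'a set set \<Rightarrow> 'a \<Rightarrow> 'a \<Rightarrow> bool" where
  "adj E u v \<longleftrightarrow> {u, v} \<in> E"

definition degree :: "'a set set \<Rightarrow> 'a \<Rightarrow> nat" where
  "degree E v = card {u. {u, v} \<in> E}"

definition connected_graph :: "'a set \<Rightarrow> 'a set set \<Rightarrow> bool" where
  "connected_graph V E \<longleftrightarrow> (\<forall>u\<in>V. \<forall>v\<in>V. (adj E)\<^sup>*\<^sup>* u v)"

definition planar :: "'a set \<Rightarrow> 'a set set \<Rightarrow> bool" where
  "planar V E \<longleftrightarrow>
     (\<exists>(pos :: 'a \<Rightarrow> complex) (\<gamma> :: 'a set \<Rightarrow> real \<Rightarrow> complex).
        inj_on pos V \<and>
        (\<forall>e\<in>E. arc (\<gamma> e) \<and> {pathstart (\<gamma> e), pathfinish (\<gamma> e)} = pos ` e \<and>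
                 path_image (\<gamma> e) \<inter> pos ` V = pos ` e) \<and>
        (\<forall>e\<in>E. \<forall>e'\<in>E. e \<noteq> e' \<longrightarrow> path_image (\<gamma> e) \<inter> path_image (\<gamma> e') \<subseteq> pos ` (e \<inter> e')))"

definition is_cycle :: "'a set \<Rightarrow> 'a set set \<Rightarrow> 'a list \<Rightarrow> bool" where
  "is_cycle V E vs \<longleftrightarrow> length vs \<ge> 3 \<and> distinct vs \<and> set vs \<subseteq> V \<and>
     (\<forall>i < length vs. adj E (vs ! i) (vs ! ((i + 1) mod length vs)))"

definition girth_ge5 :: "'a set \<Rightarrow> 'a set set \<Rightarrow> bool" where
  "girth_ge5 V E \<longleftrightarrow> (\<forall>vs. is_cycle V E vs \<longrightarrow> length vs \<ge> 5)"

definition proper_colouring :: "nat \<Rightarrow> 'a set \<Rightarrow> 'a set set \<Rightarrow> ('a \<Rightarrow> nat) \<Rightarrow> bool" where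
  "proper_colouring k V E c \<longleftrightarrow> (\<forall>v\<in>V. c v \<in> {1..k}) \<and> (\<forall>u v. adj E u v \<longrightarrow> c u \<noteq> c v)"

text \<open>A recolouring sequence of proper 4-colourings from \<alpha> to \<beta>; colourings are compared on V only.\<close>
definition recolouring_seq :: "'a set \<Rightarrow> 'a set set \<Rightarrow> ('a \<Rightarrow> nat) \<Rightarrow> ('a \<Rightarrow> nat) \<Rightarrow> ('a \<Rightarrow> nat) list \<Rightarrow> bool" where
  "recolouring_seq V E \<alpha> \<beta> cs \<longleftrightarrow> cs \<noteq> [] \<and>
     (\<forall>c\<in>set cs. proper_colouring 4 V E c) \<and>
     (\<forall>v\<in>V. hd cs v = \<alpha> v \<and> last cs v = \<beta> v) \<and>
     (\<forall>i. i + 1 < length cs \<longrightarrow> card {v\<in>V. (cs ! i) v \<noteq> (cs ! (i + 1)) v} = 1)"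

definition counterexample :: "'a set \<Rightarrow> 'a set set \<Rightarrow> ('a \<Rightarrow> nat) \<Rightarrow> ('a \<Rightarrow> nat) \<Rightarrow> bool" where
  "counterexample V E \<alpha> \<beta> \<longleftrightarrow> graph V E \<and> planar V E \<and> girth_ge5 V E \<and>
     proper_colouring 4 V E \<alpha> \<and> proper_colouring 3 V E \<beta> \<and>
     \<not> (\<exists>cs. recolouring_seq V E \<alpha> \<beta> cs)"

text \<open>Minimality is measured against all counterexamples; since being a counterexample is
  invariant under renaming vertices and every finite graph has an isomorphic copy on nat,
  it suffices to compare with counterexamples whose vertices are natural numbers.\<close>
definition minimal_counterexample :: "'a set \<Rightarrow> 'a set set \<Rightarrow> ('a \<Rightarrow> nat) \<Rightarrow> ('a \<Rightarrow> nat) \<Rightarrow> bool" where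
  "minimal_counterexample V E \<alpha> \<beta> \<longleftrightarrow> counterexample V E \<alpha> \<beta> \<and>
     (\<forall>(W :: nat set) F \<alpha>' \<beta>'. counterexample W F \<alpha>' \<beta>' \<longrightarrow> card V \<le> card W)"

end

theory Submission
  imports Defs
begin

(* Recolouring sequences are paths of single-vertex recolourings, and every proper induced
   subgraph of a minimal counterexample is recolourable from alpha to beta.
   If G is disconnected, let A be a component and B the rest: no edge joins A and B, so the
   sequences for G[A] and G[B] can be run one after the other on G.
   If v has degree at most 2, recolour G - v and let v follow along: before each step, move v
   to one of the 4 colours avoiding the at most 3 colours its neighbours carry before or after
   the step; at the end, give v the colour beta(v). *)

section \<open>Graphs and proper colourings\<close>

lemma graph_adjD:
  assumes "graph V E" "adj E u v"
  shows "u \<in> V \<and> v \<in> V \<and> u \<noteq> v"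
proof -
  have "{u, v} \<in> E" using assms(2) by (simp add: adj_def)
  then obtain a b where "{u, v} = {a, b}" "a \<noteq> b" "a \<in> V" "b \<in> V"
    using assms(1) unfolding graph_def by blast
  then show ?thesis by (auto simp: doubleton_eq_iff)
qed

lemma graph_edge_subset:
  assumes "graph V E" "e \<in> E"
  shows "e \<subseteq> V"
proof -
  obtain u v where "e = {u, v}" "u \<in> V" "v \<in> V" using assms unfolding graph_def by meson
  then show ?thesis by simp
qed

lemma graph_subgraph:
  assumes "graph V E" "A \<subseteq> V" "E' \<subseteq> E" "\<forall>e\<in>E'. e \<subseteq> A"
  shows "graph A E'"
  unfolding graph_def
proof (intro conjI ballI)
  show "finite A" using finite_subset[OF assms(2)] assms(1) by (simp add: graph_def)
  fix e assume e: "e \<in> E'"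
  then obtain u v where "e = {u, v}" "u \<noteq> v" using assms(1,3) unfolding graph_def by blast
  moreover have "e \<subseteq> A" using assms(4) e by blast
  ultimately show "\<exists>u v. e = {u, v} \<and> u \<noteq> v \<and> u \<in> A \<and> v \<in> A" by blast
qed

lemma planar_subgraph:
  assumes "planar V E" "A \<subseteq> V" "E' \<subseteq> E" "\<forall>e\<in>E'. e \<subseteq> A"
  shows "planar A E'"
proof -
  obtain pos :: "'a \<Rightarrow> complex" and \<gamma> :: "'a set \<Rightarrow> real \<Rightarrow> complex" where
    inj: "inj_on pos V" and
    arcs: "\<forall>e\<in>E. arc (\<gamma> e) \<and> {pathstart (\<gamma> e), pathfinish (\<gamma> e)} = pos ` e \<and>
                 path_image (\<gamma> e) \<inter> pos ` V = pos ` e" and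
    crossings: "\<forall>e\<in>E. \<forall>e'\<in>E. e \<noteq> e' \<longrightarrow> path_image (\<gamma> e) \<inter> path_image (\<gamma> e') \<subseteq> pos ` (e \<inter> e')"
    using assms(1) unfolding planar_def by blast
  have "\<forall>e\<in>E'. arc (\<gamma> e) \<and> {pathstart (\<gamma> e), pathfinish (\<gamma> e)} = pos ` e \<and>
        path_image (\<gamma> e) \<inter> pos ` A = pos ` e"
  proof
    fix e assume e: "e \<in> E'"
    have "e \<in> E" using e assms(3) by blast
    then have arc: "arc (\<gamma> e)" and ends: "{pathstart (\<gamma> e), pathfinish (\<gamma> e)} = pos ` e"
      and meets: "path_image (\<gamma> e) \<inter> pos ` V = pos ` e"
      using arcs by blast+
    have "pos ` e \<subseteq> path_image (\<gamma> e)"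
      unfolding ends[symmetric] by (simp add: pathstart_in_path_image pathfinish_in_path_image)
    moreover have "pos ` e \<subseteq> pos ` A" using assms(4) e by (simp add: image_mono)
    ultimately have "pos ` e \<subseteq> path_image (\<gamma> e) \<inter> pos ` A" by (rule Int_greatest)
    moreover have "path_image (\<gamma> e) \<inter> pos ` A \<subseteq> pos ` e"
      unfolding meets[symmetric] using assms(2) by (intro Int_mono order_refl image_mono)
    ultimately show "arc (\<gamma> e) \<and> {pathstart (\<gamma> e), pathfinish (\<gamma> e)} = pos ` e \<and>
        path_image (\<gamma> e) \<inter> pos ` A = pos ` e" using arc ends by (simp add: subset_antisym)
  qed
  moreover have "inj_on pos A" using inj assms(2) by (rule inj_on_subset)
  moreover have "\<forall>e\<in>E'. \<forall>e'\<in>E'. e \<noteq> e' \<longrightarrow> path_image (\<gamma> e) \<inter> path_image (\<gamma> e') \<subseteq> pos ` (e \<inter> e')"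
    using crossings assms(3) by blast
  ultimately show ?thesis unfolding planar_def by (intro exI[of _ pos] exI[of _ \<gamma>]) simp
qed

lemma girth_ge5_subgraph:
  assumes "girth_ge5 V E" "A \<subseteq> V" "E' \<subseteq> E"
  shows "girth_ge5 A E'"
  unfolding girth_ge5_def
proof (intro allI impI)
  fix vs assume "is_cycle A E' vs"
  then have "is_cycle V E vs" using assms(2,3) unfolding is_cycle_def adj_def by blast
  then show "5 \<le> length vs" using assms(1) unfolding girth_ge5_def by blast
qed

lemma proper_colouring_subgraph:
  assumes "proper_colouring k V E c" "A \<subseteq> V" "E' \<subseteq> E"
  shows "proper_colouring k A E' c"
  using assms unfolding proper_colouring_def adj_def by blast

lemma proper_colouring_mono:
  assumes "proper_colouring k V E c" "k \<le> l"
  shows "proper_colouring l V E c"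
  using assms unfolding proper_colouring_def by auto

lemma proper_colouring_cong:
  assumes "graph V E" "\<forall>v\<in>V. c v = d v" "proper_colouring k V E c"
  shows "proper_colouring k V E d"
  using assms graph_adjD[OF assms(1)] unfolding proper_colouring_def by metis

section \<open>Recolouring sequences as paths of single recolourings\<close>

definition recolour_step :: "'a set \<Rightarrow> 'a set set \<Rightarrow> ('a \<Rightarrow> nat) \<Rightarrow> ('a \<Rightarrow> nat) \<Rightarrow> bool" where
  "recolour_step V E c d \<longleftrightarrow> proper_colouring 4 V E c \<and> proper_colouring 4 V E d \<and>
     card {v\<in>V. c v \<noteq> d v} \<le> 1"

lemma recolour_step_cong:
  assumes "graph V E" "proper_colouring 4 V E c" "\<forall>v\<in>V. c v = d v"
  shows "recolour_step V E c d"
proof -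
  have "{v\<in>V. c v \<noteq> d v} = {}" using assms(3) by auto
  then show ?thesis
    using assms proper_colouring_cong unfolding recolour_step_def by (metis card.empty le0)
qed

lemma recolour_step_fun_upd:
  assumes "proper_colouring 4 V E c" "proper_colouring 4 V E (c(v := x))"
  shows "recolour_step V E c (c(v := x))"
proof -
  have "{w\<in>V. c w \<noteq> (c(v := x)) w} \<subseteq> {v}" by auto
  then have "card {w\<in>V. c w \<noteq> (c(v := x)) w} \<le> card {v}"
    by (rule card_mono[rotated]) simp
  then have "card {w\<in>V. c w \<noteq> (c(v := x)) w} \<le> 1" by simp
  then show ?thesis using assms unfolding recolour_step_def by blast
qed

lemma recolour_steps_proper:
  assumes "(recolour_step V E)\<^sup>*\<^sup>* c d" "proper_colouring 4 V E c"
  shows "proper_colouring 4 V E d"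
  using assms by (induction rule: rtranclp_induct) (auto simp: recolour_step_def)

lemma recolouring_seq_imp_recolour_steps:
  assumes "graph V E" "recolouring_seq V E \<alpha> \<beta> cs"
  shows "(recolour_step V E)\<^sup>*\<^sup>* \<alpha> \<beta>"
  using assms(2)
proof (induction cs arbitrary: \<alpha>)
  case Nil
  then show ?case by (simp add: recolouring_seq_def)
next
  case (Cons c cs)
  note seq = Cons.prems[unfolded recolouring_seq_def]
  have changes: "card {v\<in>V. ((c # cs) ! i) v \<noteq> ((c # cs) ! (i + 1)) v} = 1"
    if "i + 1 < length (c # cs)" for i
    using seq that by blast
  have c: "proper_colouring 4 V E c" using seq by simp
  have c_\<alpha>: "\<forall>v\<in>V. c v = \<alpha> v" using seq by simp
  then have "proper_colouring 4 V E \<alpha>" using proper_colouring_cong[OF assms(1) _ c] by blast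
  with c_\<alpha> have "recolour_step V E \<alpha> c" using recolour_step_cong[OF assms(1)] by simp
  moreover have "(recolour_step V E)\<^sup>*\<^sup>* c \<beta>"
  proof (cases cs)
    case Nil
    have "\<forall>v\<in>V. last (c # cs) v = \<beta> v"
      using Cons.prems unfolding recolouring_seq_def by blast
    then have "\<forall>v\<in>V. c v = \<beta> v" using Nil by simp
    then show ?thesis using recolour_step_cong[OF assms(1) c] by blast
  next
    case (Cons d ds)
    have "card {v\<in>V. c v \<noteq> d v} = 1"
      using changes[of 0] Cons by simp
    then have "recolour_step V E c d" using seq Cons by (simp add: recolour_step_def)
    moreover have "recolouring_seq V E d \<beta> cs"
      unfolding recolouring_seq_def
    proof (intro conjI ballI allI impI)
      show "card {v\<in>V. (cs ! i) v \<noteq> (cs ! (i + 1)) v} = 1" if "i + 1 < length cs" for i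
        using changes[of "Suc i"] that by simp
    qed (use seq Cons in auto)
    ultimately show ?thesis using Cons.IH by (meson converse_rtranclp_into_rtranclp)
  qed
  ultimately show ?case by (rule converse_rtranclp_into_rtranclp)
qed

lemma recolour_steps_imp_recolouring_seq:
  assumes "graph V E" "(recolour_step V E)\<^sup>*\<^sup>* \<alpha> \<beta>" "proper_colouring 4 V E \<alpha>"
  shows "\<exists>cs. recolouring_seq V E \<alpha> \<beta> cs"
  using assms(2,3)
proof (induction rule: converse_rtranclp_induct)
  case base
  then show ?case by (intro exI[of _ "[\<beta>]"]) (simp add: recolouring_seq_def)
next
  case (step \<alpha> c)
  have c: "proper_colouring 4 V E c" and "card {v\<in>V. \<alpha> v \<noteq> c v} \<le> 1"
    using step.hyps(1) by (auto simp: recolour_step_def)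
  obtain cs where cs: "recolouring_seq V E c \<beta> cs" using step.IH c by blast
  note seq = cs[unfolded recolouring_seq_def]
  have "finite {v\<in>V. \<alpha> v \<noteq> c v}" using assms(1) by (simp add: graph_def)
  then consider "{v\<in>V. \<alpha> v \<noteq> c v} = {}" | "card {v\<in>V. \<alpha> v \<noteq> c v} = 1"
    using \<open>card {v\<in>V. \<alpha> v \<noteq> c v} \<le> 1\<close> by (auto simp: le_Suc_eq)
  then show ?case
  proof cases
    case 1
    then have "recolouring_seq V E \<alpha> \<beta> cs" using seq unfolding recolouring_seq_def by auto
    then show ?thesis by blast
  next
    case 2
    have "recolouring_seq V E \<alpha> \<beta> (\<alpha> # cs)"
      unfolding recolouring_seq_def
    proof (intro conjI ballI allI impI)
      fix i assume i: "i + 1 < length (\<alpha> # cs)"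
      show "card {v\<in>V. ((\<alpha> # cs) ! i) v \<noteq> ((\<alpha> # cs) ! (i + 1)) v} = 1"
      proof (cases i)
        case 0
        have "{v\<in>V. \<alpha> v \<noteq> hd cs v} = {v\<in>V. \<alpha> v \<noteq> c v}" using seq by auto
        then show ?thesis using 0 2 seq by (simp add: hd_conv_nth)
      next
        case (Suc j)
        then show ?thesis using seq i by simp
      qed
    qed (use seq step.prems in auto)
    then show ?thesis by blast
  qed
qed

lemma recolourable_iff_recolour_steps:
  assumes "graph V E" "proper_colouring 4 V E \<alpha>"
  shows "(\<exists>cs. recolouring_seq V E \<alpha> \<beta> cs) \<longleftrightarrow> (recolour_step V E)\<^sup>*\<^sup>* \<alpha> \<beta>"
  using recolouring_seq_imp_recolour_steps[OF assms(1)]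
    recolour_steps_imp_recolouring_seq[OF assms(1) _ assms(2)] by blast

section \<open>Relabelling the vertices\<close>

locale relabelling =
  fixes V :: "'a set" and E :: "'a set set" and f :: "'a \<Rightarrow> 'b"
  assumes graph: "graph V E" and inj: "inj_on f V"
begin

lemma adj_image_iff: "adj (image f ` E) x y \<longleftrightarrow> (\<exists>u v. adj E u v \<and> x = f u \<and> y = f v)"
proof
  assume "adj (image f ` E) x y"
  then obtain e where e: "e \<in> E" "{x, y} = f ` e" by (auto simp: adj_def)
  then obtain u v where uv: "e = {u, v}" using graph unfolding graph_def by meson
  then have "{x, y} = {f u, f v}" using e(2) by simp
  then have "(x = f u \<and> y = f v) \<or> (x = f v \<and> y = f u)" by (auto simp: doubleton_eq_iff)
  moreover have "adj E u v" "adj E v u" using e(1) uv by (simp_all add: adj_def insert_commute)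
  ultimately show "\<exists>u v. adj E u v \<and> x = f u \<and> y = f v" by blast
next
  assume "\<exists>u v. adj E u v \<and> x = f u \<and> y = f v"
  then obtain u v where "{u, v} \<in> E" "x = f u" "y = f v" by (auto simp: adj_def)
  moreover have "{x, y} = f ` {u, v}" using \<open>x = f u\<close> \<open>y = f v\<close> by simp
  ultimately show "adj (image f ` E) x y" unfolding adj_def by (intro image_eqI)
qed

lemma adj_image_inv:
  assumes "adj (image f ` E) x y"
  shows "adj E (inv_into V f x) (inv_into V f y) \<and> x \<in> f ` V \<and> y \<in> f ` V"
proof -
  obtain u v where uv: "adj E u v" "x = f u" "y = f v" using assms adj_image_iff by blast
  then have "u \<in> V" "v \<in> V" using graph_adjD[OF graph] by blast+
  then show ?thesis using uv inj by simp
qed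

lemma graph_image: "graph (f ` V) (image f ` E)"
  unfolding graph_def
proof (intro conjI ballI)
  show "finite (f ` V)" using graph by (simp add: graph_def)
  fix e' assume "e' \<in> image f ` E"
  then obtain e where e: "e \<in> E" "e' = f ` e" by blast
  then obtain u v where "e = {u, v}" "u \<noteq> v" "u \<in> V" "v \<in> V" using graph unfolding graph_def by meson
  then show "\<exists>u v. e' = {u, v} \<and> u \<noteq> v \<and> u \<in> f ` V \<and> v \<in> f ` V"
    using e(2) inj by (intro exI[of _ "f u"] exI[of _ "f v"]) (auto simp: inj_on_eq_iff)
qed

lemma planar_image:
  assumes "planar V E"
  shows "planar (f ` V) (image f ` E)"
proof -
  obtain pos :: "'a \<Rightarrow> complex" and \<gamma> :: "'a set \<Rightarrow> real \<Rightarrow> complex" where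
    pos: "inj_on pos V" and
    arcs: "\<forall>e\<in>E. arc (\<gamma> e) \<and> {pathstart (\<gamma> e), pathfinish (\<gamma> e)} = pos ` e \<and>
                 path_image (\<gamma> e) \<inter> pos ` V = pos ` e" and
    crossings: "\<forall>e\<in>E. \<forall>e'\<in>E. e \<noteq> e' \<longrightarrow> path_image (\<gamma> e) \<inter> path_image (\<gamma> e') \<subseteq> pos ` (e \<inter> e')"
    using assms unfolding planar_def by blast
  define pos' where "pos' = pos \<circ> inv_into V f"
  define \<gamma>' where "\<gamma>' = (\<lambda>e'. \<gamma> (inv_into V f ` e'))"
  have pos'_image: "pos' ` f ` S = pos ` S" and \<gamma>'_image: "\<gamma>' (f ` S) = \<gamma> S" if "S \<subseteq> V" for S
  proof -
    have "pos' ` f ` S = pos ` inv_into V f ` f ` S" unfolding pos'_def by (simp add: image_comp)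
    then show "pos' ` f ` S = pos ` S" by (simp add: inv_into_image_cancel[OF inj that])
    show "\<gamma>' (f ` S) = \<gamma> S" unfolding \<gamma>'_def by (simp add: inv_into_image_cancel[OF inj that])
  qed
  have "inj_on pos' (f ` V)"
    unfolding pos'_def
    by (rule comp_inj_on[OF inj_on_inv_into[OF order_refl]])
      (simp add: inv_into_image_cancel[OF inj order_refl] pos)
  moreover have "\<forall>e'\<in>image f ` E. arc (\<gamma>' e') \<and> {pathstart (\<gamma>' e'), pathfinish (\<gamma>' e')} = pos' ` e' \<and>
                 path_image (\<gamma>' e') \<inter> pos' ` f ` V = pos' ` e'"
  proof
    fix e' assume "e' \<in> image f ` E"
    then obtain e where e: "e \<in> E" "e' = f ` e" by blast
    then have "e \<subseteq> V" using graph_edge_subset[OF graph] by blast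
    then show "arc (\<gamma>' e') \<and> {pathstart (\<gamma>' e'), pathfinish (\<gamma>' e')} = pos' ` e' \<and>
                 path_image (\<gamma>' e') \<inter> pos' ` f ` V = pos' ` e'"
      using arcs e by (simp add: pos'_image \<gamma>'_image)
  qed
  moreover have "\<forall>e1\<in>image f ` E. \<forall>e2\<in>image f ` E. e1 \<noteq> e2 \<longrightarrow>
      path_image (\<gamma>' e1) \<inter> path_image (\<gamma>' e2) \<subseteq> pos' ` (e1 \<inter> e2)"
  proof (intro ballI impI)
    fix e1 e2 assume "e1 \<in> image f ` E" "e2 \<in> image f ` E" "e1 \<noteq> e2"
    then obtain d1 d2 where d: "d1 \<in> E" "e1 = f ` d1" "d2 \<in> E" "e2 = f ` d2" "d1 \<noteq> d2" by blast
    have sub: "d1 \<subseteq> V" "d2 \<subseteq> V" using d graph_edge_subset[OF graph] by blast+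
    have "path_image (\<gamma> d1) \<inter> path_image (\<gamma> d2) \<subseteq> pos ` (d1 \<inter> d2)"
      using crossings d by blast
    moreover have "e1 \<inter> e2 = f ` (d1 \<inter> d2)" using d sub inj by (simp add: inj_on_image_Int)
    moreover have "pos' ` f ` (d1 \<inter> d2) = pos ` (d1 \<inter> d2)" using sub by (intro pos'_image) blast
    ultimately show "path_image (\<gamma>' e1) \<inter> path_image (\<gamma>' e2) \<subseteq> pos' ` (e1 \<inter> e2)"
      using d sub by (simp add: \<gamma>'_image)
  qed
  ultimately show ?thesis unfolding planar_def by (intro exI[of _ pos'] exI[of _ \<gamma>']) simp
qed

lemma girth_ge5_image:
  assumes "girth_ge5 V E"
  shows "girth_ge5 (f ` V) (image f ` E)"
  unfolding girth_ge5_def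
proof (intro allI impI)
  fix vs assume cycle: "is_cycle (f ` V) (image f ` E) vs"
  have "is_cycle V E (map (inv_into V f) vs)"
    unfolding is_cycle_def
  proof (intro conjI allI impI)
    have "inj_on (inv_into V f) (set vs)"
      using cycle inj_on_inv_into unfolding is_cycle_def by blast
    then show "distinct (map (inv_into V f) vs)" using cycle by (simp add: is_cycle_def distinct_map)
    show "set (map (inv_into V f) vs) \<subseteq> V" using cycle by (auto simp: is_cycle_def inv_into_into)
    fix i assume "i < length (map (inv_into V f) vs)"
    then have i: "i < length vs" by simp
    then have "(i + 1) mod length vs < length vs" by (intro mod_less_divisor) linarith
    moreover have "adj (image f ` E) (vs ! i) (vs ! ((i + 1) mod length vs))"
      using cycle i unfolding is_cycle_def by blast
    ultimately show "adj E (map (inv_into V f) vs ! i)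
        (map (inv_into V f) vs ! ((i + 1) mod length (map (inv_into V f) vs)))"
      using i adj_image_inv by simp
  qed (use cycle in \<open>simp add: is_cycle_def\<close>)
  then have "5 \<le> length (map (inv_into V f) vs)" using assms unfolding girth_ge5_def by blast
  then show "5 \<le> length vs" by simp
qed

lemma proper_colouring_image:
  assumes "proper_colouring k V E c"
  shows "proper_colouring k (f ` V) (image f ` E) (c \<circ> inv_into V f)"
  using assms adj_image_inv unfolding proper_colouring_def by (auto simp: inv_into_into)

lemma proper_colouring_preimage:
  assumes "proper_colouring k (f ` V) (image f ` E) c"
  shows "proper_colouring k V E (c \<circ> f)"
  unfolding proper_colouring_def
proof (intro conjI ballI allI impI)
  show "(c \<circ> f) v \<in> {1..k}" if "v \<in> V" for v
    using assms that unfolding proper_colouring_def by simp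
  show "(c \<circ> f) u \<noteq> (c \<circ> f) v" if "adj E u v" for u v
  proof -
    have "adj (image f ` E) (f u) (f v)" using that adj_image_iff by blast
    then show ?thesis using assms unfolding proper_colouring_def by simp
  qed
qed

lemma recolouring_seq_preimage:
  assumes "recolouring_seq (f ` V) (image f ` E) (\<alpha> \<circ> inv_into V f) (\<beta> \<circ> inv_into V f) cs"
  shows "recolouring_seq V E \<alpha> \<beta> (map (\<lambda>c. c \<circ> f) cs)"
  unfolding recolouring_seq_def
proof (intro conjI ballI allI impI)
  note seq = assms[unfolded recolouring_seq_def]
  show "map (\<lambda>c. c \<circ> f) cs \<noteq> []" using seq by simp
  show "proper_colouring 4 V E d" if "d \<in> set (map (\<lambda>c. c \<circ> f) cs)" for d
    using that seq proper_colouring_preimage by auto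
  show "hd (map (\<lambda>c. c \<circ> f) cs) v = \<alpha> v" "last (map (\<lambda>c. c \<circ> f) cs) v = \<beta> v"
    if "v \<in> V" for v
    using that seq inj by (simp_all add: hd_map last_map)
  fix i assume i: "i + 1 < length (map (\<lambda>c. c \<circ> f) cs)"
  have "f ` {v\<in>V. (cs ! i) (f v) \<noteq> (cs ! (i + 1)) (f v)} = {w\<in>f ` V. (cs ! i) w \<noteq> (cs ! (i + 1)) w}"
    by auto
  moreover have "inj_on f {v\<in>V. (cs ! i) (f v) \<noteq> (cs ! (i + 1)) (f v)}"
    using inj by (rule inj_on_subset) auto
  ultimately show "card {v\<in>V. (map (\<lambda>c. c \<circ> f) cs ! i) v \<noteq> (map (\<lambda>c. c \<circ> f) cs ! (i + 1)) v} = 1"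
    using seq i by (simp add: card_image[symmetric])
qed

lemma counterexample_image:
  assumes "counterexample V E \<alpha> \<beta>"
  shows "counterexample (f ` V) (image f ` E) (\<alpha> \<circ> inv_into V f) (\<beta> \<circ> inv_into V f)"
proof -
  note ce = assms[unfolded counterexample_def]
  then have "\<not> (\<exists>cs. recolouring_seq (f ` V) (image f ` E) (\<alpha> \<circ> inv_into V f) (\<beta> \<circ> inv_into V f) cs)"
    using recolouring_seq_preimage by blast
  then show ?thesis
    using ce unfolding counterexample_def
    by (simp add: graph_image planar_image girth_ge5_image proper_colouring_image)
qed

end

section \<open>Minimality\<close>

lemma counterexample_nat_copy:
  assumes "counterexample V E \<alpha> \<beta>"
  obtains W :: "nat set" and F \<alpha>' \<beta>' where "counterexample W F \<alpha>' \<beta>'" "card W = card V"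
proof -
  have graph: "graph V E" using assms by (simp add: counterexample_def)
  then have "finite V" by (simp add: graph_def)
  then obtain f :: "'a \<Rightarrow> nat" where f: "inj_on f V" using finite_imp_inj_to_nat_seg by blast
  interpret relabelling V E f using graph f by unfold_locales
  show ?thesis using that[OF counterexample_image[OF assms]] card_image[OF f] by blast
qed

lemma minimal_counterexample_card_le:
  assumes "minimal_counterexample V E \<alpha> \<beta>" "counterexample W F \<alpha>' \<beta>'"
  shows "card V \<le> card W"
proof -
  obtain W' :: "nat set" and F' \<alpha>'' \<beta>'' where W': "counterexample W' F' \<alpha>'' \<beta>''" "card W' = card W"
    using counterexample_nat_copy[OF assms(2)] .
  have "card V \<le> card W'" using assms(1) W'(1) unfolding minimal_counterexample_def by blast
  then show ?thesis using W'(2) by simp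
qed

lemma minimal_counterexample_recolourable_induced:
  assumes "minimal_counterexample V E \<alpha> \<beta>" "A \<subset> V"
  shows "(recolour_step A {e\<in>E. e \<subseteq> A})\<^sup>*\<^sup>* \<alpha> \<beta>"
proof -
  let ?E = "{e\<in>E. e \<subseteq> A}"
  have "counterexample V E \<alpha> \<beta>" using assms(1) by (simp add: minimal_counterexample_def)
  then have graph: "graph V E" and "planar V E" "girth_ge5 V E"
    and \<alpha>: "proper_colouring 4 V E \<alpha>" and \<beta>: "proper_colouring 3 V E \<beta>"
    unfolding counterexample_def by blast+
  have sub: "A \<subseteq> V" "?E \<subseteq> E" and edges: "\<forall>e\<in>?E. e \<subseteq> A" using assms(2) by auto
  have graph_A: "graph A ?E" using graph sub edges by (rule graph_subgraph)
  have "card A < card V" using graph assms(2) by (simp add: graph_def psubset_card_mono)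
  then have "\<not> counterexample A ?E \<alpha> \<beta>"
    using minimal_counterexample_card_le[OF assms(1)] leD by blast
  moreover have \<alpha>_A: "proper_colouring 4 A ?E \<alpha>" using \<alpha> sub by (rule proper_colouring_subgraph)
  moreover have "proper_colouring 3 A ?E \<beta>" using \<beta> sub by (rule proper_colouring_subgraph)
  moreover have "planar A ?E" using \<open>planar V E\<close> sub edges by (rule planar_subgraph)
  moreover have "girth_ge5 A ?E" using \<open>girth_ge5 V E\<close> sub by (rule girth_ge5_subgraph)
  ultimately have "\<exists>cs. recolouring_seq A ?E \<alpha> \<beta> cs"
    using graph_A unfolding counterexample_def by blast
  then show ?thesis using recolourable_iff_recolour_steps[OF graph_A \<alpha>_A] by blast
qed

section \<open>Connectivity\<close>

lemma proper_colouring_override_on: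
  assumes "\<forall>e\<in>E. e \<subseteq> A \<or> e \<subseteq> V - A"
    and "proper_colouring k A {e\<in>E. e \<subseteq> A} c"
    and "proper_colouring k (V - A) {e\<in>E. e \<subseteq> V - A} h"
  shows "proper_colouring k V E (override_on h c A)"
  unfolding proper_colouring_def
proof (intro conjI ballI allI impI)
  show "override_on h c A x \<in> {1..k}" if "x \<in> V" for x
  proof (cases "x \<in> A")
    case False
    then have "x \<in> V - A" using that by blast
    then show ?thesis using False assms(3) unfolding proper_colouring_def by simp
  qed (use assms(2) in \<open>simp add: proper_colouring_def\<close>)
  fix u v assume "adj E u v"
  then have uv: "{u, v} \<in> E" by (simp add: adj_def)
  have "{u, v} \<subseteq> A \<or> {u, v} \<subseteq> V - A" using assms(1) uv by (rule bspec)
  then consider "{u, v} \<subseteq> A" | "{u, v} \<subseteq> V - A" by blast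
  then show "override_on h c A u \<noteq> override_on h c A v"
  proof cases
    case 1
    then have "adj {e\<in>E. e \<subseteq> A} u v" using uv by (simp add: adj_def)
    then show ?thesis using 1 assms(2) unfolding proper_colouring_def by simp
  next
    case 2
    then have "adj {e\<in>E. e \<subseteq> V - A} u v" using uv by (simp add: adj_def)
    then show ?thesis using 2 assms(3) unfolding proper_colouring_def by simp
  qed
qed

lemma recolour_steps_override_on:
  assumes "A \<subseteq> V" "\<forall>e\<in>E. e \<subseteq> A \<or> e \<subseteq> V - A"
    and "proper_colouring 4 (V - A) {e\<in>E. e \<subseteq> V - A} h"
    and "(recolour_step A {e\<in>E. e \<subseteq> A})\<^sup>*\<^sup>* c d"
  shows "(recolour_step V E)\<^sup>*\<^sup>* (override_on h c A) (override_on h d A)"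
  using assms(4)
proof (induction rule: rtranclp_induct)
  case (step d d')
  have "{x\<in>V. override_on h d A x \<noteq> override_on h d' A x} = {x\<in>A. d x \<noteq> d' x}"
    using assms(1) by (auto simp: override_on_def)
  then have "recolour_step V E (override_on h d A) (override_on h d' A)"
    using step.hyps(2) proper_colouring_override_on[OF assms(2) _ assms(3)]
    unfolding recolour_step_def by simp
  with step.IH show ?case by (simp add: rtranclp.rtrancl_into_rtrancl)
qed simp

lemma recolour_steps_disjoint_union:
  assumes "graph V E" "A \<subseteq> V" "\<forall>e\<in>E. e \<subseteq> A \<or> e \<subseteq> V - A"
    and "proper_colouring 4 V E \<alpha>" "proper_colouring 4 V E \<beta>"
    and "(recolour_step A {e\<in>E. e \<subseteq> A})\<^sup>*\<^sup>* \<alpha> \<beta>"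
    and "(recolour_step (V - A) {e\<in>E. e \<subseteq> V - A})\<^sup>*\<^sup>* \<alpha> \<beta>"
  shows "(recolour_step V E)\<^sup>*\<^sup>* \<alpha> \<beta>"
proof -
  have complement: "V - (V - A) = A" using assms(2) by blast
  have "(recolour_step V E)\<^sup>*\<^sup>* (override_on \<alpha> \<alpha> A) (override_on \<alpha> \<beta> A)"
    by (rule recolour_steps_override_on[OF assms(2,3) _ assms(6)])
      (rule proper_colouring_subgraph[OF assms(4)]; blast)
  then have first: "(recolour_step V E)\<^sup>*\<^sup>* \<alpha> (override_on \<alpha> \<beta> A)"
    by (simp add: override_on_def)
  have "(recolour_step V E)\<^sup>*\<^sup>* (override_on \<beta> \<alpha> (V - A)) (override_on \<beta> \<beta> (V - A))"
  proof (rule recolour_steps_override_on[OF Diff_subset _ _ assms(7)])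
    show "\<forall>e\<in>E. e \<subseteq> V - A \<or> e \<subseteq> V - (V - A)" unfolding complement using assms(3) by blast
    show "proper_colouring 4 (V - (V - A)) {e\<in>E. e \<subseteq> V - (V - A)} \<beta>"
      by (rule proper_colouring_subgraph[OF assms(5)]) blast+
  qed
  then have second: "(recolour_step V E)\<^sup>*\<^sup>* (override_on \<beta> \<alpha> (V - A)) \<beta>"
    by (simp add: override_on_def)
  have "proper_colouring 4 V E (override_on \<alpha> \<beta> A)"
    using recolour_steps_proper[OF first assms(4)] .
  moreover have "\<forall>v\<in>V. override_on \<alpha> \<beta> A v = override_on \<beta> \<alpha> (V - A) v"
    by (simp add: override_on_def)
  ultimately have "recolour_step V E (override_on \<alpha> \<beta> A) (override_on \<beta> \<alpha> (V - A))"
    by (rule recolour_step_cong[OF assms(1)])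
  then show ?thesis using first second by (meson converse_rtranclp_into_rtranclp rtranclp_trans)
qed

lemma reachable_set_edge_split:
  assumes "graph V E" "e \<in> E"
  shows "e \<subseteq> {x\<in>V. (adj E)\<^sup>*\<^sup>* u x} \<or> e \<subseteq> V - {x\<in>V. (adj E)\<^sup>*\<^sup>* u x}"
proof -
  obtain x y where xy: "e = {x, y}" "x \<in> V" "y \<in> V" using assms unfolding graph_def by meson
  then have "adj E x y" "adj E y x" using assms(2) by (simp_all add: adj_def insert_commute)
  then have "(adj E)\<^sup>*\<^sup>* u x \<longleftrightarrow> (adj E)\<^sup>*\<^sup>* u y" by (meson rtranclp.rtrancl_into_rtrancl)
  then show ?thesis using xy by auto
qed

lemma minimal_counterexample_connected:
  assumes "minimal_counterexample V E \<alpha> \<beta>"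
  shows "connected_graph V E"
proof (rule ccontr)
  assume "\<not> connected_graph V E"
  then obtain u w where u: "u \<in> V" and w: "w \<in> V" and "\<not> (adj E)\<^sup>*\<^sup>* u w"
    unfolding connected_graph_def by blast
  define A where "A = {x\<in>V. (adj E)\<^sup>*\<^sup>* u x}"
  have "counterexample V E \<alpha> \<beta>" using assms by (simp add: minimal_counterexample_def)
  then have graph: "graph V E" and \<alpha>: "proper_colouring 4 V E \<alpha>"
    and \<beta>: "proper_colouring 4 V E \<beta>" and not_recolourable: "\<not> (\<exists>cs. recolouring_seq V E \<alpha> \<beta> cs)"
    unfolding counterexample_def using proper_colouring_mono by fastforce+
  have "A \<subset> V" using w \<open>\<not> (adj E)\<^sup>*\<^sup>* u w\<close> by (auto simp: A_def)
  moreover have "V - A \<subset> V" using u by (auto simp: A_def)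
  moreover have "\<forall>e\<in>E. e \<subseteq> A \<or> e \<subseteq> V - A"
    unfolding A_def using reachable_set_edge_split[OF graph] by blast
  ultimately have "(recolour_step V E)\<^sup>*\<^sup>* \<alpha> \<beta>"
    using recolour_steps_disjoint_union[OF graph _ _ \<alpha> \<beta>]
      minimal_counterexample_recolourable_induced[OF assms] by blast
  then show False using not_recolourable recolourable_iff_recolour_steps[OF graph \<alpha>] by blast
qed

section \<open>Vertices of small degree\<close>

lemma exists_colour_not_in:
  assumes "finite S" "card S < k"
  obtains z :: nat where "z \<in> {1..k}" "z \<notin> S"
proof -
  have "\<not> {1..k} \<subseteq> S"
  proof
    assume "{1..k} \<subseteq> S"
    then have "card {1..k} \<le> card S" using assms(1) by (rule card_mono[rotated])
    then show False using assms(2) by simp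
  qed
  then show ?thesis using that by blast
qed

lemma proper_colouring_fun_upd:
  assumes "graph V E" "v \<in> V"
    and "proper_colouring k (V - {v}) {e\<in>E. e \<subseteq> V - {v}} c"
    and "z \<in> {1..k}" "\<forall>u. {u, v} \<in> E \<longrightarrow> c u \<noteq> z"
  shows "proper_colouring k V E (c(v := z))"
  unfolding proper_colouring_def
proof (intro conjI ballI allI impI)
  show "(c(v := z)) x \<in> {1..k}" if "x \<in> V" for x
    using assms(3,4) that unfolding proper_colouring_def by (cases "x = v") simp_all
  fix a b assume ab: "adj E a b"
  then have "a \<in> V" "b \<in> V" "a \<noteq> b" using graph_adjD[OF assms(1)] by blast+
  have edge: "{a, b} \<in> E" using ab by (simp add: adj_def)
  show "(c(v := z)) a \<noteq> (c(v := z)) b"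
  proof (cases "a = v \<or> b = v")
    case True
    then show ?thesis using assms(5) edge \<open>a \<noteq> b\<close> by (auto simp: insert_commute)
  next
    case False
    then have "adj {e\<in>E. e \<subseteq> V - {v}} a b"
      using edge \<open>a \<in> V\<close> \<open>b \<in> V\<close> by (simp add: adj_def)
    then show ?thesis using False assms(3) unfolding proper_colouring_def by simp
  qed
qed

lemma exists_colour_avoiding_neighbours:
  fixes d d' :: "'a \<Rightarrow> nat"
  assumes "finite U" "{u. {u, v} \<in> E} \<subseteq> U" "degree E v \<le> 2" "card {w\<in>U. d w \<noteq> d' w} \<le> 1"
  obtains z where "z \<in> {1..4}" "\<forall>u. {u, v} \<in> E \<longrightarrow> d u \<noteq> z \<and> d' u \<noteq> z"
proof -
  define N where "N = {u. {u, v} \<in> E}"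
  define D where "D = {w\<in>U. d w \<noteq> d' w}"
  have "N \<subseteq> U" using assms(2) by (simp add: N_def)
  then have "finite N" "finite D" using assms(1) finite_subset by (auto simp: D_def)
  have "card (d ` N \<union> d' ` D) \<le> card (d ` N) + card (d' ` D)" by (rule card_Un_le)
  also have "\<dots> \<le> card N + card D"
    using \<open>finite N\<close> \<open>finite D\<close> by (intro add_mono card_image_le)
  finally have "card (d ` N \<union> d' ` D) < 4"
    using assms(3,4) unfolding N_def D_def degree_def by linarith
  moreover have "finite (d ` N \<union> d' ` D)" using \<open>finite N\<close> \<open>finite D\<close> by simp
  ultimately obtain z where z: "z \<in> {1..4}" "z \<notin> d ` N \<union> d' ` D"
    using exists_colour_not_in by metis
  have "d u \<noteq> z \<and> d' u \<noteq> z" if "u \<in> N" for u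
  proof (cases "u \<in> D")
    case False
    then have "d' u = d u" using that \<open>N \<subseteq> U\<close> by (auto simp: D_def)
    then show ?thesis using z(2) that by force
  qed (use z(2) that in blast)
  then show ?thesis using that z(1) unfolding N_def by blast
qed

lemma recolour_step_extend_low_degree:
  assumes "graph V E" "v \<in> V" "degree E v \<le> 2"
    and "recolour_step (V - {v}) {e\<in>E. e \<subseteq> V - {v}} d d'"
    and "proper_colouring 4 V E (d(v := y))"
  obtains z where "(recolour_step V E)\<^sup>*\<^sup>* (d(v := y)) (d'(v := z))"
proof -
  have d: "proper_colouring 4 (V - {v}) {e\<in>E. e \<subseteq> V - {v}} d"
    and d': "proper_colouring 4 (V - {v}) {e\<in>E. e \<subseteq> V - {v}} d'"
    and D: "card {w\<in>V - {v}. d w \<noteq> d' w} \<le> 1"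
    using assms(4) unfolding recolour_step_def by blast+
  have "finite (V - {v})" using assms(1) by (simp add: graph_def)
  moreover have "{u. {u, v} \<in> E} \<subseteq> V - {v}"
    using graph_adjD[OF assms(1)] by (auto simp: adj_def)
  ultimately obtain z where z: "z \<in> {1..4}" "\<forall>u. {u, v} \<in> E \<longrightarrow> d u \<noteq> z \<and> d' u \<noteq> z"
    using assms(3) D by (rule exists_colour_avoiding_neighbours)
  have "\<forall>u. {u, v} \<in> E \<longrightarrow> d u \<noteq> z" "\<forall>u. {u, v} \<in> E \<longrightarrow> d' u \<noteq> z" using z(2) by simp_all
  then have "proper_colouring 4 V E (d(v := z))" "proper_colouring 4 V E (d'(v := z))"
    using proper_colouring_fun_upd[OF assms(1,2) _ z(1)] d d' by simp_all
  moreover have "{w\<in>V. (d(v := z)) w \<noteq> (d'(v := z)) w} = {w\<in>V - {v}. d w \<noteq> d' w}" by auto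
  ultimately have "recolour_step V E (d(v := y)) (d(v := z))" "recolour_step V E (d(v := z)) (d'(v := z))"
    using recolour_step_fun_upd[OF assms(5), of v z] D by (simp_all add: recolour_step_def)
  then show ?thesis using that by (meson rtranclp.rtrancl_into_rtrancl r_into_rtranclp)
qed

lemma recolour_steps_extend_low_degree:
  assumes "graph V E" "v \<in> V" "degree E v \<le> 2"
    and "(recolour_step (V - {v}) {e\<in>E. e \<subseteq> V - {v}})\<^sup>*\<^sup>* c d"
    and "proper_colouring 4 V E (c(v := x))"
  shows "\<exists>y. (recolour_step V E)\<^sup>*\<^sup>* (c(v := x)) (d(v := y))"
  using assms(4)
proof (induction rule: rtranclp_induct)
  case (step d d')
  then obtain y where y: "(recolour_step V E)\<^sup>*\<^sup>* (c(v := x)) (d(v := y))" by blast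
  then have "proper_colouring 4 V E (d(v := y))" using assms(5) by (rule recolour_steps_proper)
  then obtain z where "(recolour_step V E)\<^sup>*\<^sup>* (d(v := y)) (d'(v := z))"
    using recolour_step_extend_low_degree[OF assms(1-3) step.hyps(2)] by blast
  then show ?case using y by (meson rtranclp_trans)
qed blast

lemma minimal_counterexample_degree_ge_3:
  assumes "minimal_counterexample V E \<alpha> \<beta>" "v \<in> V"
  shows "3 \<le> degree E v"
proof (rule ccontr)
  assume "\<not> 3 \<le> degree E v"
  then have low: "degree E v \<le> 2" by simp
  have "counterexample V E \<alpha> \<beta>" using assms(1) by (simp add: minimal_counterexample_def)
  then have graph: "graph V E" and \<alpha>: "proper_colouring 4 V E \<alpha>"
    and \<beta>: "proper_colouring 3 V E \<beta>" and not_recolourable: "\<not> (\<exists>cs. recolouring_seq V E \<alpha> \<beta> cs)"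
    unfolding counterexample_def by blast+
  have "V - {v} \<subset> V" using assms(2) by blast
  then have "(recolour_step (V - {v}) {e\<in>E. e \<subseteq> V - {v}})\<^sup>*\<^sup>* \<alpha> \<beta>"
    by (rule minimal_counterexample_recolourable_induced[OF assms(1)])
  moreover have "proper_colouring 4 V E (\<alpha>(v := \<alpha> v))" using \<alpha> by simp
  ultimately obtain y where y: "(recolour_step V E)\<^sup>*\<^sup>* \<alpha> (\<beta>(v := y))"
    using recolour_steps_extend_low_degree[OF graph assms(2) low] by fastforce
  have "recolour_step V E (\<beta>(v := y)) ((\<beta>(v := y))(v := \<beta> v))"
    using recolour_steps_proper[OF y \<alpha>] proper_colouring_mono[OF \<beta>]
    by (intro recolour_step_fun_upd) simp_all
  then have "(recolour_step V E)\<^sup>*\<^sup>* \<alpha> \<beta>" using y by simp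
  then show False using not_recolourable recolourable_iff_recolour_steps[OF graph \<alpha>] by blast
qed

theorem lemma4:
  fixes V :: "'a set" and E :: "'a set set" and \<alpha> \<beta> :: "'a \<Rightarrow> nat"
  assumes "minimal_counterexample V E \<alpha> \<beta>"
  shows "connected_graph V E \<and> (\<forall>v\<in>V. degree E v \<ge> 3)"
  using minimal_counterexample_connected[OF assms] minimal_counterexample_degree_ge_3[OF assms]
  by blast

end
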